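(* Let $P$ be a domain and $D\ge 2$ an integer, and let $R\subseteq P$. Suppose that initially each pixel of $R$ carries exactly one unit of snow, the pixels of $P\setminus R$ carry no snow, and the snowblower stands on a pixel of $P\setminus R$. Then every sequence of moves in the default model that obeys the capacity constraint and after which no pixel of $P$ carries snow consists of at least $|R|$ moves and of at least $\frac{1}{D}\sum_{q\in R}\mathrm{vdist}(q)$ moves. (Consequently the same bounds hold in the adjustable-throw and fixed-throw models.)
   Context: A pixel is a closed unit square $[i,i+1]\times[j,j+1]$, $i,j\in\mathbb{Z}$; two pixels are adjacent if they share a side. The domain $P$ is a finite set of pixels whose dual graph $G_P$ (vertex per pixel, edges between adjacent pixels) is connected. A boundary side is a side of a pixel of $P$ not shared with another pixel of $P$; a boundary pixel is a pixel of $P$ with a boundary side. For $q\in P$, $\mathrm{vdist}(q)=1+\min_{b}\mathrm{dist}_{G_P}(q,b)$, the minimum over boundary pixels $b$ of $P$. A move: the snowblower goes from its pixel $v$ to an adjacent pixel $u\in P$, and upon entering $u$ all snow on $u$ is thrown onto the pixel adjacent to $u$ in a chosen direction (default model: forward, left, right, or backward onto $v$; adjustable-throw: forward, left, right; fixed-throw: right, all relative to the motion $v\to u$); if that pixel is not in $P$ the snow disappears, otherwise it is added to the snow there. Capacity constraint: at all times every pixel of $P$ carries at most $D$ units of snow. *)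

theory Defs
  imports Complex_Main
begin

text \<open>A pixel [i,i+1] x [j,j+1] is represented by its lower-left corner (i,j).\<close>
type_synonym pixel = "int \<times> int"

definition adjacent :: "pixel \<Rightarrow> pixel \<Rightarrow> bool" where
  "adjacent p q \<longleftrightarrow> \<bar>fst p - fst q\<bar> + \<bar>snd p - snd q\<bar> = 1"

definition gpath :: "pixel set \<Rightarrow> pixel list \<Rightarrow> bool" where
  "gpath P xs \<longleftrightarrow> xs \<noteq> [] \<and> set xs \<subseteq> P \<and> (\<forall>i. Suc i < length xs \<longrightarrow> adjacent (xs ! i) (xs ! Suc i))"

definition domain :: "pixel set \<Rightarrow> bool" where
  "domain P \<longleftrightarrow> finite P \<and> P \<noteq> {} \<and>
     (\<forall>p\<in>P. \<forall>q\<in>P. \<exists>xs. gpath P xs \<and> hd xs = p \<and> last xs = q)"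

definition gdist :: "pixel set \<Rightarrow> pixel \<Rightarrow> pixel \<Rightarrow> nat" where
  "gdist P p q = (LEAST n. \<exists>xs. gpath P xs \<and> hd xs = p \<and> last xs = q \<and> length xs = Suc n)"

definition boundary_pixel :: "pixel set \<Rightarrow> pixel \<Rightarrow> bool" where
  "boundary_pixel P b \<longleftrightarrow> b \<in> P \<and> (\<exists>q. adjacent b q \<and> q \<notin> P)"

definition vdist :: "pixel set \<Rightarrow> pixel \<Rightarrow> nat" where
  "vdist P q = 1 + Min (gdist P q ` {b. boundary_pixel P b})"

datatype throw = Forward | Left | Right | Backward

datatype model = Default | Adjustable | Fixed

definition allowed :: "model \<Rightarrow> throw set" where
  "allowed M = (case M of Default \<Rightarrow> {Forward, Left, Right, Backward}
                        | Adjustable \<Rightarrow> {Forward, Left, Right}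
                        | Fixed \<Rightarrow> {Right})"

text \<open>Throw vector relative to the motion vector m = (dx,dy); left = counterclockwise.\<close>
definition throw_vec :: "int \<times> int \<Rightarrow> throw \<Rightarrow> int \<times> int" where
  "throw_vec m t = (case t of Forward \<Rightarrow> m
                           | Left \<Rightarrow> (- snd m, fst m)
                           | Right \<Rightarrow> (snd m, - fst m)
                           | Backward \<Rightarrow> (- fst m, - snd m))"

text \<open>State: position of the snowblower and amount of snow on each pixel.
  The move v -> u with throw t: snow on u goes to the pixel w next to u in direction t,
  disappearing if w is not in P.\<close>
definition move :: "pixel set \<Rightarrow> pixel \<times> (pixel \<Rightarrow> nat) \<Rightarrow> pixel \<Rightarrow> throw \<Rightarrow> pixel \<times> (pixel \<Rightarrow> nat)" where
  "move P st u t =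
     (let v = fst st; s = snd st;
          w = (fst u + fst (throw_vec (fst u - fst v, snd u - snd v) t),
               snd u + snd (throw_vec (fst u - fst v, snd u - snd v) t))
      in (u, if w \<in> P then (s(u := 0))(w := s w + s u) else s(u := 0)))"

definition capacity_ok :: "nat \<Rightarrow> pixel set \<Rightarrow> (pixel \<Rightarrow> nat) \<Rightarrow> bool" where
  "capacity_ok D P s \<longleftrightarrow> (\<forall>p\<in>P. s p \<le> D)"

fun valid_run :: "model \<Rightarrow> nat \<Rightarrow> pixel set \<Rightarrow> pixel \<times> (pixel \<Rightarrow> nat) \<Rightarrow> (pixel \<times> throw) list \<Rightarrow> bool" where
  "valid_run M D P st [] \<longleftrightarrow> capacity_ok D P (snd st)"
| "valid_run M D P st ((u, t) # ms) \<longleftrightarrow>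
     capacity_ok D P (snd st) \<and> u \<in> P \<and> adjacent (fst st) u \<and> t \<in> allowed M \<and>
     valid_run M D P (move P st u t) ms"

fun run_final :: "pixel set \<Rightarrow> pixel \<times> (pixel \<Rightarrow> nat) \<Rightarrow> (pixel \<times> throw) list \<Rightarrow> pixel \<times> (pixel \<Rightarrow> nat)" where
  "run_final P st [] = st"
| "run_final P st ((u, t) # ms) = run_final P (move P st u t) ms"

end

theory Submission
  imports Defs
begin

text \<open>The potential \<open>\<Sum>\<^sub>p s p \<cdot> vdist p\<close> of a snow distribution \<open>s\<close> is \<open>\<Sum>\<^sub>q\<^sub>\<in>\<^sub>R vdist q\<close> initially
  and 0 at the end. A move only touches the snow on the entered pixel \<open>u\<close>, at most \<open>D\<close> units by
  the capacity constraint, and throws it to a neighbour, whose vdist is at least \<open>vdist u - 1\<close>,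
  or out of \<open>P\<close>, in which case \<open>u\<close> is a boundary pixel with \<open>vdist u = 1\<close>. Either way the
  potential drops by at most \<open>D\<close> per move. Moreover snow leaves a pixel only when the
  snowblower enters it, so every pixel of \<open>R\<close> must be entered.\<close>

lemma gdist_le_length:
  assumes "gpath P xs" "hd xs = p" "last xs = q"
  shows "gdist P p q \<le> length xs - 1"
proof -
  have "length xs = Suc (length xs - 1)" using assms(1) by (simp add: gpath_def)
  then show ?thesis unfolding gdist_def using assms by (intro Least_le) metis
qed

lemma gdist_shortest_path:
  assumes "domain P" "p \<in> P" "q \<in> P"
  obtains xs where "gpath P xs" "hd xs = p" "last xs = q" "length xs = Suc (gdist P p q)"
proof -
  obtain xs where "gpath P xs" "hd xs = p" "last xs = q"
    using assms unfolding domain_def by blast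
  then have "\<exists>n xs. gpath P xs \<and> hd xs = p \<and> last xs = q \<and> length xs = Suc n"
    by (metis gpath_def length_greater_0_conv Suc_pred)
  then have "\<exists>xs. gpath P xs \<and> hd xs = p \<and> last xs = q \<and> length xs = Suc (gdist P p q)"
    unfolding gdist_def by (rule LeastI_ex)
  then show ?thesis using that by blast
qed

lemma gpath_Cons:
  assumes "gpath P xs" "u \<in> P" "adjacent u (hd xs)"
  shows "gpath P (u # xs)"
  using assms unfolding gpath_def by (auto simp: nth_Cons hd_conv_nth split: nat.split)

lemma gdist_adjacent_le:
  assumes "domain P" "u \<in> P" "w \<in> P" "b \<in> P" "adjacent u w"
  shows "gdist P u b \<le> Suc (gdist P w b)"
proof -
  obtain xs where xs: "gpath P xs" "hd xs = w" "last xs = b" "length xs = Suc (gdist P w b)"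
    using gdist_shortest_path[OF assms(1,3,4)] .
  then have "xs \<noteq> []" by (simp add: gpath_def)
  moreover have "gpath P (u # xs)" using xs assms by (intro gpath_Cons) auto
  ultimately have "gdist P u b \<le> length (u # xs) - 1"
    using xs by (intro gdist_le_length) auto
  then show ?thesis using xs by simp
qed

lemma boundary_pixel_exists:
  assumes "finite P" "P \<noteq> {}"
  obtains b where "boundary_pixel P b"
proof -
  define m where "m = Max (fst ` P)"
  have "m \<in> fst ` P" unfolding m_def using assms by (intro Max_in) auto
  then obtain p where p: "p \<in> P" "fst p = m" by auto
  have "(fst p + 1, snd p) \<notin> P"
  proof
    assume "(fst p + 1, snd p) \<in> P"
    then have "fst p + 1 \<le> m" unfolding m_def using assms(1) by (metis Max_ge finite_imageI fst_conv image_eqI)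
    then show False using p by simp
  qed
  moreover have "adjacent p (fst p + 1, snd p)" by (simp add: adjacent_def)
  ultimately show ?thesis using p that unfolding boundary_pixel_def by blast
qed

lemma vdist_adjacent_le:
  assumes "domain P" "u \<in> P" "w \<in> P" "adjacent u w"
  shows "vdist P u \<le> Suc (vdist P w)"
proof -
  define B where "B = {b. boundary_pixel P b}"
  have "B \<subseteq> P" by (auto simp: B_def boundary_pixel_def)
  then have fin: "finite B" using assms(1) by (meson domain_def finite_subset)
  have "B \<noteq> {}"
    using boundary_pixel_exists[of P] assms(1) by (auto simp: B_def domain_def)
  then have "Min (gdist P w ` B) \<in> gdist P w ` B" using fin by (intro Min_in) auto
  then obtain b where b: "b \<in> B" "gdist P w b = Min (gdist P w ` B)" by auto
  have "Min (gdist P u ` B) \<le> gdist P u b" using fin b by (intro Min_le) auto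
  also have "\<dots> \<le> Suc (gdist P w b)"
    using gdist_adjacent_le[OF assms(1-3) _ assms(4)] b \<open>B \<subseteq> P\<close> by blast
  finally show ?thesis unfolding vdist_def B_def[symmetric] using b by simp
qed

lemma vdist_boundary_pixel:
  assumes "domain P" "boundary_pixel P u"
  shows "vdist P u = 1"
proof -
  define B where "B = {b. boundary_pixel P b}"
  have "B \<subseteq> P" by (auto simp: B_def boundary_pixel_def)
  then have fin: "finite B" using assms(1) by (meson domain_def finite_subset)
  have "gpath P [u]" using assms(2) by (simp add: gpath_def boundary_pixel_def)
  then have "gdist P u u = 0" using gdist_le_length[of P "[u]" u u] by simp
  moreover have "Min (gdist P u ` B) \<le> gdist P u u"
    using fin assms(2) by (intro Min_le) (auto simp: B_def)
  ultimately show ?thesis unfolding vdist_def B_def[symmetric] by simp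
qed

definition throw_target :: "pixel \<Rightarrow> pixel \<Rightarrow> throw \<Rightarrow> pixel" where
  "throw_target v u t =
     (let d = throw_vec (fst u - fst v, snd u - snd v) t in (fst u + fst d, snd u + snd d))"

lemma move_eq:
  "move P (v, s) u t =
     (u, if throw_target v u t \<in> P
         then (s(u := 0))(throw_target v u t := s (throw_target v u t) + s u)
         else s(u := 0))"
  by (simp add: move_def throw_target_def Let_def)

lemma adjacent_throw_target:
  assumes "adjacent v u"
  shows "adjacent u (throw_target v u t)"
  using assms by (cases t) (auto simp: adjacent_def throw_vec_def throw_target_def)

definition snow_potential :: "pixel set \<Rightarrow> (pixel \<Rightarrow> nat) \<Rightarrow> nat" where
  "snow_potential P s = (\<Sum>p\<in>P. s p * vdist P p)"

lemma snow_potential_fun_upd: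
  assumes "finite P" "p \<in> P"
  shows "snow_potential P (s(p := a)) + s p * vdist P p = snow_potential P s + a * vdist P p"
proof -
  have "(\<Sum>q\<in>P - {p}. (s(p := a)) q * vdist P q) = (\<Sum>q\<in>P - {p}. s q * vdist P q)"
    by (rule sum.cong) auto
  then show ?thesis using assms unfolding snow_potential_def by (simp add: sum.remove)
qed

lemma snow_potential_move:
  assumes "domain P" "u \<in> P" "adjacent v u"
  shows "snow_potential P s \<le> snow_potential P (snd (move P (v, s) u t)) + s u"
proof -
  define w where "w = throw_target v u t"
  have adj: "adjacent u w" unfolding w_def by (rule adjacent_throw_target[OF assms(3)])
  then have "w \<noteq> u" by (auto simp: adjacent_def)
  have fin: "finite P" using assms(1) by (simp add: domain_def)
  have cleared: "snow_potential P (s(u := 0)) + s u * vdist P u = snow_potential P s"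
    using snow_potential_fun_upd[OF fin assms(2), of s 0] by simp
  show ?thesis
  proof (cases "w \<in> P")
    case True
    have "snow_potential P ((s(u := 0))(w := s w + s u)) + s w * vdist P w
        = snow_potential P (s(u := 0)) + (s w + s u) * vdist P w"
      using snow_potential_fun_upd[OF fin True, of "s(u := 0)"] \<open>w \<noteq> u\<close> by simp
    moreover have "s u * vdist P u \<le> s u * vdist P w + s u"
      using mult_le_mono2[OF vdist_adjacent_le[OF assms(1,2) True adj], of "s u"] by simp
    ultimately show ?thesis
      using cleared True by (simp add: move_eq w_def[symmetric] algebra_simps)
  next
    case False
    then have "boundary_pixel P u" using assms(2) adj unfolding boundary_pixel_def by blast
    then have "vdist P u = 1" by (rule vdist_boundary_pixel[OF assms(1)])
    then show ?thesis using cleared False by (simp add: move_eq w_def[symmetric])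
  qed
qed

lemma valid_run_snow_potential:
  assumes "domain P" "valid_run M D P st ms"
  shows "snow_potential P (snd st) \<le> snow_potential P (snd (run_final P st ms)) + D * length ms"
  using assms(2)
proof (induction ms arbitrary: st)
  case Nil
  then show ?case by simp
next
  case (Cons m ms)
  obtain u t v s where m: "m = (u, t)" and st: "st = (v, s)" by fastforce
  then have h: "s u \<le> D" "u \<in> P" "adjacent v u" "valid_run M D P (move P (v, s) u t) ms"
    using Cons.prems by (auto simp: capacity_ok_def)
  have "snow_potential P s \<le> snow_potential P (snd (move P (v, s) u t)) + D"
    using snow_potential_move[OF assms(1) h(2,3), of s t] h(1) by linarith
  then show ?case using Cons.IH[OF h(4)] m st by simp
qed

lemma run_final_unentered:
  assumes "p \<notin> fst ` set ms"
  shows "snd st p \<le> snd (run_final P st ms) p"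
  using assms
proof (induction ms arbitrary: st)
  case Nil
  then show ?case by simp
next
  case (Cons m ms)
  obtain u t where m: "m = (u, t)" by fastforce
  then have "snd st p \<le> snd (move P st u t) p"
    using Cons.prems by (auto simp: move_def Let_def)
  also have "\<dots> \<le> snd (run_final P (move P st u t) ms) p" using Cons by auto
  finally show ?case using m by simp
qed

lemma snow_potential_indicator:
  assumes "finite P" "R \<subseteq> P"
  shows "snow_potential P (\<lambda>p. if p \<in> R then 1 else 0) = (\<Sum>q\<in>R. vdist P q)"
proof -
  have "snow_potential P (\<lambda>p. if p \<in> R then 1 else 0) = (\<Sum>p\<in>P. if p \<in> R then vdist P p else 0)"
    unfolding snow_potential_def by (intro sum.cong) auto
  also have "\<dots> = (\<Sum>q\<in>R. vdist P q)"
    using assms by (simp add: sum.inter_restrict[symmetric] Int_absorb1)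
  finally show ?thesis .
qed

theorem lemma2:
  fixes P R :: "pixel set" and D :: nat and v0 :: pixel
    and ms :: "(pixel \<times> throw) list" and M :: model
  assumes "domain P" and "D \<ge> 2" and "R \<subseteq> P"
    and "v0 \<in> P - R"
    and "valid_run M D P (v0, \<lambda>p. if p \<in> R then 1 else 0) ms"
    and "\<forall>p\<in>P. snd (run_final P (v0, \<lambda>p. if p \<in> R then 1 else 0) ms) p = 0"
  shows "card R \<le> length ms \<and> real (\<Sum>q\<in>R. vdist P q) / real D \<le> real (length ms)"
proof -
  let ?st = "(v0, \<lambda>p. if p \<in> R then 1 else 0) :: pixel \<times> (pixel \<Rightarrow> nat)"
  have "R \<subseteq> set (map fst ms)"
    using run_final_unentered[of _ ms ?st P] assms(3,6) by fastforce
  then have "card R \<le> card (set (map fst ms))" by (intro card_mono) auto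
  also have "\<dots> \<le> length ms" using card_length[of "map fst ms"] by simp
  finally have moves_ge_card: "card R \<le> length ms" .
  have "snow_potential P (snd (run_final P ?st ms)) = 0"
    unfolding snow_potential_def using assms(6) by simp
  then have "(\<Sum>q\<in>R. vdist P q) \<le> D * length ms"
    using valid_run_snow_potential[OF assms(1,5)] snow_potential_indicator[OF _ assms(3)] assms(1)
    by (simp add: domain_def)
  then have "real (\<Sum>q\<in>R. vdist P q) \<le> real D * real (length ms)"
    by (metis of_nat_le_iff of_nat_mult)
  then show ?thesis
    using moves_ge_card assms(2) by (simp add: divide_le_eq mult.commute)
qed

end
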